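(* Let $\lambda \in [0,1)$ and $\delta \ge 0$. Let $\{X(a)\}_{a\in\{0,1\}^n}$ and $\{Z(a)\}_{a\in\{0,1\}^n}$ be families of efficient binary observables on a finite-dimensional Hilbert space $\mathcal{H}$ such that $W(a)W(b) = W(a+b)$ for all $W \in \{X,Z\}$ and all $a,b\in\{0,1\}^n$. Let $\rho$ be a normalised state on $\mathcal{H}$ with $\rho \overset{c}{\approx}_\delta \mathbb{E}_{a\in\{0,1\}^n} W(a)\rho W(a)$ for both $W \in \{X,Z\}$, and let $S \subseteq \{0,1\}^n$ be $\lambda$-biased. Then \[ \mathbb{E}_{a,b\in\{0,1\}^n} \|Z(a)X(b) - (-1)^{a\cdot b}X(b)Z(a)\|_\rho^2 \le \frac{1}{(1-\lambda)^2}\,\mathbb{E}_{a,b\in S}\|Z(a)X(b) - (-1)^{a\cdot b}X(b)Z(a)\|_\rho^2 + \frac{2\delta(2-\lambda)}{(1-\lambda)^2}. \]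
   Context: A binary observable is a Hermitian unitary. The state-dependent norm is $\|A\|_\rho^2 := \mathrm{Tr}[A^\dagger A\rho]$. Expectations over sets are uniform. A set $S \subseteq \{0,1\}^n$ is $\lambda$-biased if for every nonzero $b \in \{0,1\}^n$, $|\mathbb{E}_{a \in S}(-1)^{a\cdot b}| \le \lambda$. For states $\rho,\rho'$, the relation $\rho \overset{c}{\approx}_\delta \rho'$ is taken (as in the paper's usage) to mean: for all efficiently implementable unitaries $U, U'$ (on the relevant Hilbert space, including after tensoring with an auxiliary maximally mixed register and efficient Pauli operators on it), $\big|\|U - U'\|_\rho^2 - \|U-U'\|_{\rho'}^2\big| \le \delta$; "efficient" refers to implementability by polynomial-size quantum circuits. *)

theory Defs
  imports "Jordan_Normal_Form.Matrix" Complex_Main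
begin

definition adj :: "complex mat \<Rightarrow> complex mat" where
  "adj A = mat (dim_col A) (dim_row A) (\<lambda>(i,j). cnj (A $$ (j,i)))"

definition mtrace :: "complex mat \<Rightarrow> complex" where
  "mtrace A = (\<Sum>i<dim_row A. A $$ (i,i))"

definition unitary :: "nat \<Rightarrow> complex mat \<Rightarrow> bool" where
  "unitary d U \<longleftrightarrow> U \<in> carrier_mat d d \<and> adj U * U = 1\<^sub>m d \<and> U * adj U = 1\<^sub>m d"

definition binary_observable :: "nat \<Rightarrow> complex mat \<Rightarrow> bool" where
  "binary_observable d A \<longleftrightarrow> unitary d A \<and> adj A = A"

definition density :: "nat \<Rightarrow> complex mat \<Rightarrow> bool" where
  "density d \<rho> \<longleftrightarrow> \<rho> \<in> carrier_mat d d \<and> adj \<rho> = \<rho> \<and>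
     (\<forall>v :: nat \<Rightarrow> complex.
        (let q = (\<Sum>i<d. \<Sum>j<d. cnj (v i) * \<rho> $$ (i,j) * v j) in Im q = 0 \<and> Re q \<ge> 0)) \<and>
     mtrace \<rho> = 1"

text \<open>State-dependent (squared) norm  ||A||_rho^2 = Tr[A^* A rho]  (real for a state).\<close>
definition snorm_sq :: "complex mat \<Rightarrow> complex mat \<Rightarrow> real" where
  "snorm_sq \<rho> A = Re (mtrace (adj A * A * \<rho>))"

definition kron :: "complex mat \<Rightarrow> complex mat \<Rightarrow> complex mat" where
  "kron A B = mat (dim_row A * dim_row B) (dim_col A * dim_col B)
     (\<lambda>(i,j). A $$ (i div dim_row B, j div dim_col B) * B $$ (i mod dim_row B, j mod dim_col B))"

definition max_mixed :: "nat \<Rightarrow> complex mat" where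
  "max_mixed k = (1 / 2 ^ k) \<cdot>\<^sub>m 1\<^sub>m (2 ^ k)"

text \<open>Computational indistinguishability relative to a class Eff of efficiently
  implementable operators (of any dimension): for every number k of auxiliary
  maximally mixed qubits and all efficient unitaries U, U' on H (x) (C^2)^k.\<close>
definition comp_approx :: "complex mat set \<Rightarrow> nat \<Rightarrow> real \<Rightarrow> complex mat \<Rightarrow> complex mat \<Rightarrow> bool" where
  "comp_approx Eff d \<delta> \<rho> \<rho>' \<longleftrightarrow>
     (\<forall>k U U'. U \<in> Eff \<longrightarrow> U' \<in> Eff \<longrightarrow> unitary (d * 2 ^ k) U \<longrightarrow> unitary (d * 2 ^ k) U' \<longrightarrow>
        \<bar>snorm_sq (kron \<rho> (max_mixed k)) (U - U') - snorm_sq (kron \<rho>' (max_mixed k)) (U - U')\<bar> \<le> \<delta>)"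

definition cube :: "nat \<Rightarrow> bool list set" where
  "cube n = {a. length a = n}"

definition bxor :: "bool list \<Rightarrow> bool list \<Rightarrow> bool list" where
  "bxor a b = map2 (\<noteq>) a b"

definition bdot :: "bool list \<Rightarrow> bool list \<Rightarrow> nat" where
  "bdot a b = length (filter id (map2 (\<and>) a b))"

definition avg :: "'a set \<Rightarrow> ('a \<Rightarrow> real) \<Rightarrow> real" where
  "avg A f = (\<Sum>x\<in>A. f x) / real (card A)"

text \<open>Lambda-biased set (nonempty, so that uniform expectation over it makes sense).\<close>
definition lambda_biased :: "nat \<Rightarrow> real \<Rightarrow> bool list set \<Rightarrow> bool" where
  "lambda_biased n lam S \<longleftrightarrow> S \<subseteq> cube n \<and> S \<noteq> {} \<and>
     (\<forall>b\<in>cube n. b \<noteq> replicate n False \<longrightarrow> \<bar>avg S (\<lambda>a. (-1) ^ bdot a b)\<bar> \<le> lam)"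

definition twirl :: "nat \<Rightarrow> nat \<Rightarrow> (bool list \<Rightarrow> complex mat) \<Rightarrow> complex mat \<Rightarrow> complex mat" where
  "twirl d n W \<rho> = mat d d (\<lambda>(i,j). (\<Sum>a\<in>cube n. (W a * \<rho> * W a) $$ (i,j)) / of_nat (card (cube n)))"

end

theory Submission
  imports Defs
begin

text \<open>
  For a Hermitian state \<sigma> of trace one, binary observables A, B and a sign s,
  ||AB - s BA||^2 = 2 - 2 s Re Tr(BABA \<sigma>). Let \<tau> be the Z-twirl of \<rho> and fix b. Conjugating
  by Z(c) shows that Tr(B(a) \<tau>), where B(x) = X(b) Z(x) X(b) Z(x), is the average over c of the
  positive semidefinite kernel Tr(B(c)^* B(c + a) \<rho>). Hence h(a) = (-1)^(a\<cdot>b) Re Tr(B(a) \<tau>) has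
  nonnegative Fourier coefficients and h(0) = 1, so its average over a \<lambda>-biased set S is at
  most \<lambda> + (1 - \<lambda>) E h. For the squared commutator norms in the state \<tau> this says that the
  average over S is at least (1 - \<lambda>) times the average over all a. The same holds in b for
  the X-twirl. Indistinguishability, tested on the efficient unitaries Z(a) X(b) and
  \<plusminus>X(b) Z(a), moves each bound back to \<rho> at cost \<delta>, and the two coordinates combine.
\<close>

section \<open>Bit strings and characters of the cube\<close>

lemma length_bxor [simp]: "length (bxor a b) = min (length a) (length b)"
  by (simp add: bxor_def)

lemma bxor_in_cube: "a \<in> cube n \<Longrightarrow> b \<in> cube n \<Longrightarrow> bxor a b \<in> cube n"
  by (simp add: cube_def)

lemma bxor_commute: "bxor a b = bxor b a"
  unfolding bxor_def by (induction a arbitrary: b) (auto simp: zip_Cons1 split: list.splits)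

lemma bxor_bxor_cancel: "length c = length a \<Longrightarrow> bxor c (bxor c a) = a"
  unfolding bxor_def by (induction c a rule: list_induct2) auto

lemma bxor_eq_replicate_False_iff:
  "length a = length b \<Longrightarrow> bxor a b = replicate (length a) False \<longleftrightarrow> a = b"
  unfolding bxor_def by (induction a b rule: list_induct2) auto

lemma replicate_False_in_cube [simp]: "replicate n False \<in> cube n"
  by (simp add: cube_def)

lemma finite_cube [simp]: "finite (cube n)"
  unfolding cube_def using finite_lists_length_eq[of "UNIV :: bool set" n] by simp

lemma bdot_Cons [simp]: "bdot (x # a) (y # b) = (if x \<and> y then Suc (bdot a b) else bdot a b)"
  by (simp add: bdot_def)

lemma bdot_Nil [simp]: "bdot [] b = 0" "bdot a [] = 0"
  by (auto simp: bdot_def)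

lemma bdot_commute: "bdot a b = bdot b a"
  by (induction a arbitrary: b) (auto simp: neq_Nil_conv, case_tac b, auto)

lemma bdot_replicate_False [simp]: "bdot a (replicate m False) = 0" "bdot (replicate m False) a = 0"
proof -
  show "bdot a (replicate m False) = 0"
    by (induction a arbitrary: m) (auto, case_tac m, auto)
  then show "bdot (replicate m False) a = 0"
    by (simp add: bdot_commute)
qed

lemma sign_bdot_bxor:
  "length x = length y \<Longrightarrow> (-1::real) ^ bdot (bxor x y) w = (-1) ^ bdot x w * (-1) ^ bdot y w"
proof (induction x y arbitrary: w rule: list_induct2)
  case (Cons a x b y)
  have "bxor (a # x) (b # y) = (a \<noteq> b) # bxor x y"
    by (simp add: bxor_def)
  show ?case
  proof (cases w)
    case (Cons c w')
    then show ?thesis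
      using Cons.IH[of w'] \<open>bxor (a # x) (b # y) = (a \<noteq> b) # bxor x y\<close> by auto
  qed simp
qed (simp add: bxor_def)

lemma sign_bdot_bxor_right:
  "length x = length y \<Longrightarrow> (-1::real) ^ bdot w (bxor x y) = (-1) ^ bdot w x * (-1) ^ bdot w y"
  using sign_bdot_bxor[of x y w] by (simp add: bdot_commute)

lemma sum_cube_Suc: "(\<Sum>w\<in>cube (Suc n). g w) = (\<Sum>w\<in>cube n. g (True # w) + g (False # w))"
proof -
  have "cube (Suc n) = Cons True ` cube n \<union> Cons False ` cube n"
    unfolding cube_def by (auto simp: length_Suc_conv)
  then have "(\<Sum>w\<in>cube (Suc n). g w) = (\<Sum>w\<in>Cons True ` cube n. g w) + (\<Sum>w\<in>Cons False ` cube n. g w)"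
    by (simp add: sum.union_disjoint[symmetric]) (rule sum.union_disjoint, auto)
  also have "\<dots> = (\<Sum>w\<in>cube n. g (True # w)) + (\<Sum>w\<in>cube n. g (False # w))"
    by (simp add: sum.reindex inj_on_def)
  finally show ?thesis by (simp add: sum.distrib)
qed

lemma sum_cube_character:
  "x \<in> cube n \<Longrightarrow> (\<Sum>w\<in>cube n. (-1::real) ^ bdot x w) = (if x = replicate n False then 2 ^ n else 0)"
proof (induction n arbitrary: x)
  case (Suc n)
  then obtain b x' where x: "x = b # x'" "x' \<in> cube n" by (cases x) (auto simp: cube_def)
  show ?case
  proof (cases b)
    case True
    then have "(\<Sum>w\<in>cube (Suc n). (-1::real) ^ bdot x w) = (\<Sum>w\<in>cube n. 0)"
      unfolding sum_cube_Suc x by (intro sum.cong) auto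
    then show ?thesis using True x by simp
  next
    case False
    then have "(\<Sum>w\<in>cube (Suc n). (-1::real) ^ bdot x w) = 2 * (\<Sum>w\<in>cube n. (-1::real) ^ bdot x' w)"
      unfolding sum_cube_Suc x sum_distrib_left by (intro sum.cong) auto
    then show ?thesis using False x Suc.IH[OF x(2)] by simp
  qed
qed (simp add: cube_def)

lemma card_cube: "card (cube n) = 2 ^ n"
proof -
  have "real (card (cube n)) = 2 ^ n"
    using sum_cube_character[OF replicate_False_in_cube, of n] by simp
  then show ?thesis by (metis of_nat_eq_of_nat_power_cancel_iff of_nat_numeral)
qed

lemma sum_cube_bxor_reindex: "c \<in> cube n \<Longrightarrow> (\<Sum>a\<in>cube n. g (bxor c a)) = (\<Sum>e\<in>cube n. g e)"
proof -
  assume c: "c \<in> cube n"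
  have "bij_betw (bxor c) (cube n) (cube n)"
    by (rule bij_betwI[where g = "bxor c"]) (use c in \<open>auto simp: bxor_in_cube bxor_bxor_cancel cube_def\<close>)
  then show ?thesis by (rule sum.reindex_bij_betw)
qed

section \<open>Uniform averages\<close>

lemma avg_cong: "(\<And>x. x \<in> A \<Longrightarrow> f x = g x) \<Longrightarrow> avg A f = avg A g"
  unfolding avg_def by (simp cong: sum.cong)

lemma avg_mono: "(\<And>x. x \<in> A \<Longrightarrow> f x \<le> g x) \<Longrightarrow> avg A f \<le> avg A g"
  unfolding avg_def by (intro divide_right_mono sum_mono) auto

lemma avg_affine: "finite A \<Longrightarrow> A \<noteq> {} \<Longrightarrow> avg A (\<lambda>x. c + k * f x) = c + k * avg A f"
  unfolding avg_def by (simp add: sum.distrib sum_distrib_left[symmetric] add_divide_distrib)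

lemma avg_Times_inner_left:
  "finite A \<Longrightarrow> finite B \<Longrightarrow> avg (A \<times> B) (\<lambda>(a,b). F a b) = avg B (\<lambda>b. avg A (\<lambda>a. F a b))"
  unfolding avg_def
  by (simp add: sum.cartesian_product[symmetric] sum.swap[of _ A] card_cartesian_product
      sum_divide_distrib[symmetric])

lemma avg_Times_inner_right:
  "finite A \<Longrightarrow> finite B \<Longrightarrow> avg (A \<times> B) (\<lambda>(a,b). F a b) = avg A (\<lambda>a. avg B (\<lambda>b. F a b))"
  unfolding avg_def
  by (simp add: sum.cartesian_product[symmetric] card_cartesian_product
      sum_divide_distrib[symmetric] mult.commute)

lemma avg_transfer_lower_bound:
  assumes "finite C" "S \<subseteq> C" "S \<noteq> {}" "0 \<le> \<kappa>"
    and close: "\<And>x. x \<in> C \<Longrightarrow> \<bar>f x - g x\<bar> \<le> \<delta>"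
    and g: "\<kappa> * avg C g \<le> avg S g"
  shows "\<kappa> * avg C f - (1 + \<kappa>) * \<delta> \<le> avg S f"
proof -
  have S: "finite S" and C: "C \<noteq> {}" using assms(1-3) finite_subset by auto
  have "avg S g \<le> avg S (\<lambda>x. \<delta> + 1 * f x)"
    by (intro avg_mono) (smt (verit) close assms(2) subsetD)
  then have "avg S g \<le> \<delta> + avg S f"
    unfolding avg_affine[OF S assms(3)] by simp
  moreover have "avg C (\<lambda>x. - \<delta> + 1 * f x) \<le> avg C g"
    by (intro avg_mono) (smt (verit) close)
  then have "avg C f - \<delta> \<le> avg C g"
    unfolding avg_affine[OF assms(1) C] by simp
  ultimately show ?thesis
    using g mult_left_mono[OF \<open>avg C f - \<delta> \<le> avg C g\<close> \<open>0 \<le> \<kappa>\<close>] by (simp add: algebra_simps)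
qed

lemma avg_Times_lower_bound:
  assumes "finite C" "S \<subseteq> C" "S \<noteq> {}" "0 \<le> \<kappa>"
    and rows: "\<And>b. b \<in> S \<Longrightarrow> \<kappa> * avg C (\<lambda>a. F a b) - e \<le> avg S (\<lambda>a. F a b)"
    and cols: "\<And>a. a \<in> C \<Longrightarrow> \<kappa> * avg C (F a) - e \<le> avg S (F a)"
  shows "\<kappa>\<^sup>2 * avg (C \<times> C) (\<lambda>(a,b). F a b) \<le> avg (S \<times> S) (\<lambda>(a,b). F a b) + (1 + \<kappa>) * e"
proof -
  have S: "finite S" and C: "C \<noteq> {}" using assms(1-3) finite_subset by auto
  have "avg S (\<lambda>b. - e + \<kappa> * avg C (\<lambda>a. F a b)) \<le> avg S (\<lambda>b. avg S (\<lambda>a. F a b))"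
    by (intro avg_mono) (smt (verit) rows)
  then have "- e + \<kappa> * avg S (\<lambda>b. avg C (\<lambda>a. F a b)) \<le> avg (S \<times> S) (\<lambda>(a,b). F a b)"
    unfolding avg_affine[OF S assms(3)] avg_Times_inner_left[OF S S] .
  moreover have "avg C (\<lambda>a. - e + \<kappa> * avg C (F a)) \<le> avg C (\<lambda>a. avg S (F a))"
    by (intro avg_mono) (smt (verit) cols)
  then have "- e + \<kappa> * avg (C \<times> C) (\<lambda>(a,b). F a b) \<le> avg C (\<lambda>a. avg S (F a))"
    unfolding avg_affine[OF assms(1) C] avg_Times_inner_right[OF assms(1,1)] .
  then have "\<kappa> * (- e + \<kappa> * avg (C \<times> C) (\<lambda>(a,b). F a b)) \<le> \<kappa> * avg C (\<lambda>a. avg S (F a))"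
    using assms(4) by (rule mult_left_mono)
  moreover have "avg S (\<lambda>b. avg C (\<lambda>a. F a b)) = avg C (\<lambda>a. avg S (F a))"
    using avg_Times_inner_left[OF assms(1) S] avg_Times_inner_right[OF assms(1) S] by simp
  ultimately show ?thesis
    by (simp add: power2_eq_square algebra_simps)
qed

section \<open>Fourier analysis on the cube\<close>

definition fourier_coeff :: "nat \<Rightarrow> (bool list \<Rightarrow> real) \<Rightarrow> bool list \<Rightarrow> real" where
  "fourier_coeff n h \<psi> = avg (cube n) (\<lambda>a. (-1) ^ bdot a \<psi> * h a)"

lemma fourier_inversion:
  assumes a: "a \<in> cube n"
  shows "h a = (\<Sum>\<psi>\<in>cube n. fourier_coeff n h \<psi> * (-1) ^ bdot a \<psi>)"
proof -
  have N: "real (card (cube n)) = 2 ^ n" by (simp add: card_cube)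
  have "(\<Sum>\<psi>\<in>cube n. fourier_coeff n h \<psi> * (-1) ^ bdot a \<psi>)
      = (\<Sum>\<psi>\<in>cube n. \<Sum>a'\<in>cube n. h a' * (-1) ^ bdot (bxor a' a) \<psi> / 2 ^ n)"
    unfolding fourier_coeff_def avg_def N sum_divide_distrib sum_distrib_right
    by (intro sum.cong refl) (use a in \<open>simp add: sign_bdot_bxor cube_def\<close>)
  also have "\<dots> = (\<Sum>a'\<in>cube n. h a' * (\<Sum>\<psi>\<in>cube n. (-1) ^ bdot (bxor a' a) \<psi>) / 2 ^ n)"
    by (subst sum.swap) (simp add: sum_distrib_left sum_divide_distrib)
  also have "\<dots> = (\<Sum>a'\<in>cube n. if a' = a then h a' else 0)"
  proof (intro sum.cong refl)
    fix a' assume a': "a' \<in> cube n"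
    have "bxor a' a = replicate n False \<longleftrightarrow> a' = a"
      using bxor_eq_replicate_False_iff[of a' a] a a' by (simp add: cube_def)
    then show "h a' * (\<Sum>\<psi>\<in>cube n. (-1) ^ bdot (bxor a' a) \<psi>) / 2 ^ n = (if a' = a then h a' else 0)"
      by (simp add: sum_cube_character[OF bxor_in_cube[OF a' a]])
  qed
  also have "\<dots> = h a" using a by simp
  finally show ?thesis by simp
qed

lemma avg_biased_le_of_fourier_coeff_nonneg:
  assumes S: "lambda_biased n lam S"
    and nonneg: "\<And>\<psi>. \<psi> \<in> cube n \<Longrightarrow> 0 \<le> fourier_coeff n h \<psi>"
  shows "avg S h \<le> lam * h (replicate n False) + (1 - lam) * avg (cube n) h"
proof -
  define z where "z = replicate n False"
  define \<beta> where "\<beta> \<psi> = avg S (\<lambda>a. (-1::real) ^ bdot a \<psi>)" for \<psi>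
  have S_sub: "S \<subseteq> cube n" and S_ne: "S \<noteq> {}"
    using S unfolding lambda_biased_def by auto
  have "finite S"
    using finite_subset[OF S_sub] by simp
  then have \<beta>_z: "\<beta> z = 1"
    using S_ne unfolding \<beta>_def avg_def z_def by simp
  have \<beta>_le: "\<beta> \<psi> \<le> lam" if "\<psi> \<in> cube n - {z}" for \<psi>
    using S that unfolding lambda_biased_def \<beta>_def z_def by force
  have hat_z: "fourier_coeff n h z = avg (cube n) h"
    unfolding fourier_coeff_def z_def by simp
  have sum_hat: "(\<Sum>\<psi>\<in>cube n. fourier_coeff n h \<psi>) = h z"
    using fourier_inversion[of z n h] by (simp add: z_def)
  have "avg S h = (\<Sum>\<psi>\<in>cube n. fourier_coeff n h \<psi> * \<beta> \<psi>)"
    unfolding avg_def \<beta>_def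
    using fourier_inversion[of _ n h] S_sub
    by (simp add: sum_divide_distrib sum_distrib_left sum.swap[of _ S] subset_iff cong: sum.cong)
  also have "\<dots> = fourier_coeff n h z + (\<Sum>\<psi>\<in>cube n - {z}. fourier_coeff n h \<psi> * \<beta> \<psi>)"
    using sum.remove[OF finite_cube, of z n "\<lambda>\<psi>. fourier_coeff n h \<psi> * \<beta> \<psi>"] \<beta>_z
    by (simp add: z_def)
  also have "\<dots> \<le> fourier_coeff n h z + (\<Sum>\<psi>\<in>cube n - {z}. fourier_coeff n h \<psi> * lam)"
    using \<beta>_le nonneg by (intro add_left_mono sum_mono mult_left_mono) auto
  also have "\<dots> = fourier_coeff n h z + lam * (h z - fourier_coeff n h z)"
    using sum.remove[OF finite_cube, of z n "fourier_coeff n h"] sum_hat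
    by (simp add: sum_distrib_right[symmetric] z_def)
  finally show ?thesis
    using hat_z by (simp add: z_def algebra_simps)
qed

lemma sum_sign_shift:
  "(\<Sum>c\<in>cube n. \<Sum>a\<in>cube n. of_real ((-1) ^ bdot a \<omega>) * K c (bxor c a))
    = (\<Sum>c\<in>cube n. \<Sum>e\<in>cube n. of_real ((-1) ^ bdot c \<omega> * (-1) ^ bdot e \<omega>) * (K c e :: 'a :: real_algebra_1))"
proof (rule sum.cong[OF refl])
  fix c assume c: "c \<in> cube n"
  have "(\<Sum>a\<in>cube n. of_real ((-1) ^ bdot a \<omega>) * K c (bxor c a))
      = (\<Sum>a\<in>cube n. of_real ((-1) ^ bdot (bxor c (bxor c a)) \<omega>) * K c (bxor c a))"
    using c by (intro sum.cong refl) (simp add: bxor_bxor_cancel cube_def)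
  also have "\<dots> = (\<Sum>e\<in>cube n. of_real ((-1) ^ bdot (bxor c e) \<omega>) * K c e)"
    by (rule sum_cube_bxor_reindex[OF c])
  also have "\<dots> = (\<Sum>e\<in>cube n. of_real ((-1) ^ bdot c \<omega> * (-1) ^ bdot e \<omega>) * K c e)"
    using c by (intro sum.cong refl) (simp add: sign_bdot_bxor cube_def)
  finally show "(\<Sum>a\<in>cube n. of_real ((-1) ^ bdot a \<omega>) * K c (bxor c a))
    = (\<Sum>e\<in>cube n. of_real ((-1) ^ bdot c \<omega> * (-1) ^ bdot e \<omega>) * K c e)" .
qed

section \<open>Adjoints, traces and states\<close>

lemma dim_adj [simp]: "dim_row (adj A) = dim_col A" "dim_col (adj A) = dim_row A"
  by (auto simp: adj_def)

lemma index_adj [simp]: "i < dim_col A \<Longrightarrow> j < dim_row A \<Longrightarrow> adj A $$ (i,j) = cnj (A $$ (j,i))"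
  by (simp add: adj_def)

lemma adj_carrier [simp]: "A \<in> carrier_mat n m \<Longrightarrow> adj A \<in> carrier_mat m n"
  unfolding carrier_mat_def by simp

lemma adj_mult: "A \<in> carrier_mat n m \<Longrightarrow> B \<in> carrier_mat m k \<Longrightarrow> adj (A * B) = adj B * adj A"
  by (intro eq_matI) (auto simp: scalar_prod_def mult.commute)

lemma adj_smult: "adj (c \<cdot>\<^sub>m A) = cnj c \<cdot>\<^sub>m adj A"
  by (intro eq_matI) auto

lemma smult_smult_mat: "a \<cdot>\<^sub>m (b \<cdot>\<^sub>m A) = (a * b :: 'a :: semigroup_mult) \<cdot>\<^sub>m A"
  by (intro eq_matI) (auto simp: mult.assoc)

lemma one_smult_mat: "(1 :: 'a :: monoid_mult) \<cdot>\<^sub>m A = A"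
  by (intro eq_matI) auto

lemma hermitian_entry:
  assumes "adj S = S" "S \<in> carrier_mat d d" "i < d" "j < d"
  shows "S $$ (i,j) = cnj (S $$ (j,i))"
  using index_adj[of i S j] assms by simp

lemma mtrace_mult_commute:
  assumes "A \<in> carrier_mat n m" "B \<in> carrier_mat m n"
  shows "mtrace (A * B) = mtrace (B * A)"
proof -
  have "mtrace (A * B) = (\<Sum>i<n. \<Sum>l<m. A $$ (i,l) * B $$ (l,i))"
    using assms by (simp add: mtrace_def scalar_prod_def atLeast0LessThan)
  also have "\<dots> = (\<Sum>l<m. \<Sum>i<n. B $$ (l,i) * A $$ (i,l))"
    by (subst sum.swap) (simp add: mult.commute)
  also have "\<dots> = mtrace (B * A)"
    using assms by (simp add: mtrace_def scalar_prod_def atLeast0LessThan)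
  finally show ?thesis .
qed

lemma mtrace_add: "A \<in> carrier_mat n n \<Longrightarrow> B \<in> carrier_mat n n \<Longrightarrow> mtrace (A + B) = mtrace A + mtrace B"
  by (simp add: mtrace_def sum.distrib)

lemma mtrace_minus: "A \<in> carrier_mat n n \<Longrightarrow> B \<in> carrier_mat n n \<Longrightarrow> mtrace (A - B) = mtrace A - mtrace B"
  by (simp add: mtrace_def sum_subtractf)

lemma mtrace_smult: "A \<in> carrier_mat n n \<Longrightarrow> mtrace (c \<cdot>\<^sub>m A) = c * mtrace A"
  by (simp add: mtrace_def sum_distrib_left)

lemma mtrace_adj_mult_hermitian:
  assumes P: "P \<in> carrier_mat d d" and S: "S \<in> carrier_mat d d" "adj S = S"
  shows "mtrace (adj P * S) = cnj (mtrace (P * S))"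
proof -
  have "mtrace (adj P * S) = (\<Sum>i<d. \<Sum>k<d. cnj (P $$ (k,i)) * S $$ (k,i))"
    using P S by (simp add: mtrace_def scalar_prod_def atLeast0LessThan)
  also have "\<dots> = (\<Sum>k<d. \<Sum>i<d. cnj (P $$ (k,i)) * S $$ (k,i))"
    by (rule sum.swap)
  also have "\<dots> = (\<Sum>k<d. \<Sum>i<d. cnj (P $$ (k,i) * S $$ (i,k)))"
  proof (intro sum.cong refl)
    fix k i assume "k \<in> {..<d}" "i \<in> {..<d}"
    then have "S $$ (k,i) = cnj (S $$ (i,k))"
      by (intro hermitian_entry[OF S(2,1)]) auto
    then show "cnj (P $$ (k,i)) * S $$ (k,i) = cnj (P $$ (k,i) * S $$ (i,k))"
      by simp
  qed
  also have "\<dots> = cnj (mtrace (P * S))"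
    using P S by (simp add: mtrace_def scalar_prod_def atLeast0LessThan cnj_sum)
  finally show ?thesis .
qed

lemma mtrace_add_mult:
  "A \<in> carrier_mat d d \<Longrightarrow> B \<in> carrier_mat d d \<Longrightarrow> S \<in> carrier_mat d d \<Longrightarrow>
    mtrace ((A + B) * S) = mtrace (A * S) + mtrace (B * S)"
  by (simp add: add_mult_distrib_mat mtrace_add[of _ d])

lemma mtrace_diff_mult:
  "A \<in> carrier_mat d d \<Longrightarrow> B \<in> carrier_mat d d \<Longrightarrow> S \<in> carrier_mat d d \<Longrightarrow>
    mtrace ((A - B) * S) = mtrace (A * S) - mtrace (B * S)"
  by (simp add: minus_mult_distrib_mat mtrace_minus[of _ d])

lemma mtrace_smult_mult:
  "A \<in> carrier_mat d d \<Longrightarrow> S \<in> carrier_mat d d \<Longrightarrow> mtrace ((c \<cdot>\<^sub>m A) * S) = c * mtrace (A * S)"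
  by (simp add: mult_smult_assoc_mat mtrace_smult[of _ d])

lemma densityD:
  assumes "density d \<rho>"
  shows "\<rho> \<in> carrier_mat d d" "adj \<rho> = \<rho>" "mtrace \<rho> = 1"
  using assms by (auto simp: density_def)

lemma density_quadratic_form_nonneg:
  assumes "density d R"
  shows "0 \<le> Re (\<Sum>k<d. \<Sum>l<d. cnj (u k) * u l * R $$ (l,k))"
proof -
  let ?v = "\<lambda>i. cnj (u i)"
  have "0 \<le> Re (\<Sum>i<d. \<Sum>j<d. cnj (?v i) * R $$ (i,j) * ?v j)"
    using assms unfolding density_def Let_def by (blast dest: spec[of _ ?v])
  also have "(\<Sum>i<d. \<Sum>j<d. cnj (?v i) * R $$ (i,j) * ?v j) = (\<Sum>k<d. \<Sum>l<d. cnj (u k) * u l * R $$ (l,k))"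
    by (subst sum.swap) (simp add: mult_ac)
  finally show ?thesis .
qed

lemma sum_rotate3: "(\<Sum>a\<in>A. \<Sum>b\<in>B. \<Sum>c\<in>C. f a b c) = (\<Sum>c\<in>C. \<Sum>a\<in>A. \<Sum>b\<in>B. f a b c)"
proof -
  have "(\<Sum>a\<in>A. \<Sum>b\<in>B. \<Sum>c\<in>C. f a b c) = (\<Sum>a\<in>A. \<Sum>c\<in>C. \<Sum>b\<in>B. f a b c)"
    by (intro sum.cong refl) (rule sum.swap)
  then show ?thesis
    by (simp only: sum.swap[of _ A C])
qed

text \<open>The double sum is Tr(M^* M R) for M = \<Sum>i. \<beta> i B i, which is nonnegative as R is.\<close>
lemma gram_mtrace_nonneg:
  assumes B: "\<And>i. i \<in> I \<Longrightarrow> B i \<in> carrier_mat d d" and R: "density d R"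
  shows "0 \<le> Re (\<Sum>i\<in>I. \<Sum>j\<in>I. complex_of_real (\<beta> i * \<beta> j) * mtrace (adj (B i) * (B j * R)))"
proof -
  have Rc: "R \<in> carrier_mat d d" using densityD[OF R] by simp
  define u where "u r k = (\<Sum>i\<in>I. complex_of_real (\<beta> i) * B i $$ (r,k))" for r k
  define F where "F i j r k l = cnj (complex_of_real (\<beta> i) * B i $$ (r,k)) * (complex_of_real (\<beta> j) * B j $$ (r,l)) * R $$ (l,k)" for i j r k l
  have "complex_of_real (\<beta> i * \<beta> j) * mtrace (adj (B i) * (B j * R)) = (\<Sum>r<d. \<Sum>k<d. \<Sum>l<d. F i j r k l)"
    if "i \<in> I" "j \<in> I" for i j
  proof -
    have "mtrace (adj (B i) * (B j * R)) = (\<Sum>k<d. \<Sum>r<d. \<Sum>l<d. cnj (B i $$ (r,k)) * (B j $$ (r,l) * R $$ (l,k)))"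
      using B[OF that(1)] B[OF that(2)] Rc
      by (simp add: mtrace_def scalar_prod_def atLeast0LessThan sum_distrib_left)
    also have "\<dots> = (\<Sum>r<d. \<Sum>k<d. \<Sum>l<d. cnj (B i $$ (r,k)) * (B j $$ (r,l) * R $$ (l,k)))"
      by (rule sum.swap)
    finally show ?thesis
      unfolding F_def by (simp add: sum_distrib_left mult_ac)
  qed
  then have "(\<Sum>i\<in>I. \<Sum>j\<in>I. complex_of_real (\<beta> i * \<beta> j) * mtrace (adj (B i) * (B j * R)))
      = (\<Sum>i\<in>I. \<Sum>j\<in>I. \<Sum>r<d. \<Sum>k<d. \<Sum>l<d. F i j r k l)"
    by (intro sum.cong refl) auto
  also have "\<dots> = (\<Sum>r<d. \<Sum>i\<in>I. \<Sum>j\<in>I. \<Sum>k<d. \<Sum>l<d. F i j r k l)"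
    by (rule sum_rotate3)
  also have "\<dots> = (\<Sum>r<d. \<Sum>k<d. \<Sum>i\<in>I. \<Sum>j\<in>I. \<Sum>l<d. F i j r k l)"
    by (intro sum.cong refl) (rule sum_rotate3)
  also have "\<dots> = (\<Sum>r<d. \<Sum>k<d. \<Sum>l<d. \<Sum>i\<in>I. \<Sum>j\<in>I. F i j r k l)"
    by (intro sum.cong refl) (rule sum_rotate3)
  also have "\<dots> = (\<Sum>r<d. \<Sum>k<d. \<Sum>l<d. cnj (u r k) * u r l * R $$ (l,k))"
  proof (intro sum.cong refl)
    fix r k l
    show "(\<Sum>i\<in>I. \<Sum>j\<in>I. F i j r k l) = cnj (u r k) * u r l * R $$ (l,k)"
      unfolding F_def u_def cnj_sum sum_distrib_right sum_distrib_left
      by (simp add: mult.assoc, rule sum.swap)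
  qed
  finally have "Re (\<Sum>i\<in>I. \<Sum>j\<in>I. complex_of_real (\<beta> i * \<beta> j) * mtrace (adj (B i) * (B j * R)))
      = (\<Sum>r<d. Re (\<Sum>k<d. \<Sum>l<d. cnj (u r k) * u r l * R $$ (l,k)))"
    by (simp only: Re_sum)
  then show ?thesis
    by (simp only: sum_nonneg density_quadratic_form_nonneg[OF R])
qed

section \<open>Binary observables and commutators\<close>

lemma binary_observableD:
  assumes "binary_observable d A"
  shows "A \<in> carrier_mat d d" "adj A = A" "A * A = 1\<^sub>m d"
  using assms unfolding binary_observable_def unitary_def by auto

lemma binary_observable_hom_zero:
  assumes W: "\<And>a. a \<in> cube n \<Longrightarrow> binary_observable d (W a)"
    and hom: "\<And>a b. a \<in> cube n \<Longrightarrow> b \<in> cube n \<Longrightarrow> W a * W b = W (bxor a b)"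
  shows "W (replicate n False) = 1\<^sub>m d"
proof -
  let ?z = "replicate n False"
  have "bxor ?z ?z = ?z"
    using bxor_eq_replicate_False_iff[of ?z ?z] by simp
  then show ?thesis
    using hom[of ?z ?z] binary_observableD(3)[OF W[of ?z]] by simp
qed

lemma binary_observable_mult_cancel:
  "binary_observable d A \<Longrightarrow> X \<in> carrier_mat d n \<Longrightarrow> A * (A * X) = X"
  using assoc_mult_mat[of A d d A d X n] binary_observableD[of d A] by simp

lemma adj_diff_sign_smult_mult_self:
  fixes r :: real
  assumes A: "A \<in> carrier_mat d d" and B: "B \<in> carrier_mat d d" and r: "r * r = 1"
  defines "c \<equiv> complex_of_real r"
  shows "adj (A - c \<cdot>\<^sub>m B) * (A - c \<cdot>\<^sub>m B) = adj A * A - c \<cdot>\<^sub>m (adj A * B + adj B * A) + adj B * B"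
proof (rule eq_matI)
  fix i j assume "i < dim_row (adj A * A - c \<cdot>\<^sub>m (adj A * B + adj B * A) + adj B * B)"
    "j < dim_col (adj A * A - c \<cdot>\<^sub>m (adj A * B + adj B * A) + adj B * B)"
  then have i: "i < d" and j: "j < d" using A B by auto
  have cc: "c * c = 1"
    using r unfolding c_def by (metis of_real_1 of_real_mult)
  have "(adj (A - c \<cdot>\<^sub>m B) * (A - c \<cdot>\<^sub>m B)) $$ (i,j)
     = (\<Sum>l<d. (cnj (A $$ (l,i)) - c * cnj (B $$ (l,i))) * (A $$ (l,j) - c * B $$ (l,j)))"
    using A B i j by (simp add: scalar_prod_def atLeast0LessThan c_def)
  also have "\<dots> = (\<Sum>l<d. cnj (A $$ (l,i)) * A $$ (l,j)) - c * ((\<Sum>l<d. cnj (A $$ (l,i)) * B $$ (l,j))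
      + (\<Sum>l<d. cnj (B $$ (l,i)) * A $$ (l,j))) + (c * c) * (\<Sum>l<d. cnj (B $$ (l,i)) * B $$ (l,j))"
    by (simp add: algebra_simps sum.distrib sum_subtractf sum_distrib_left)
  also have "\<dots> = (adj A * A - c \<cdot>\<^sub>m (adj A * B + adj B * A) + adj B * B) $$ (i,j)"
    using A B i j by (simp add: scalar_prod_def atLeast0LessThan cc)
  finally show "(adj (A - c \<cdot>\<^sub>m B) * (A - c \<cdot>\<^sub>m B)) $$ (i,j)
    = (adj A * A - c \<cdot>\<^sub>m (adj A * B + adj B * A) + adj B * B) $$ (i,j)" .
qed (use A B in auto)

lemma mtrace_alternating_adj:
  assumes A: "binary_observable d A" and B: "binary_observable d B"
    and \<sigma>: "\<sigma> \<in> carrier_mat d d" "adj \<sigma> = \<sigma>"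
  shows "mtrace (A * B * A * B * \<sigma>) = cnj (mtrace (B * A * B * A * \<sigma>))"
proof -
  note A' = binary_observableD[OF A] and B' = binary_observableD[OF B]
  have "adj (B * A * B * A) = A * B * A * B"
    using A' B' by (simp add: adj_mult[of _ d d _ d] assoc_mult_mat[of _ d d _ d _ d])
  then show ?thesis
    using mtrace_adj_mult_hermitian[of "B * A * B * A" d \<sigma>] A' B' \<sigma>
    by (simp add: assoc_mult_mat[of _ d d _ d _ d])
qed

lemma snorm_sq_commutator:
  assumes A: "binary_observable d A" and B: "binary_observable d B"
    and \<sigma>: "\<sigma> \<in> carrier_mat d d" "adj \<sigma> = \<sigma>" "mtrace \<sigma> = 1"
  shows "snorm_sq \<sigma> (A * B - (-1) ^ k \<cdot>\<^sub>m (B * A)) = 2 - 2 * (-1) ^ k * Re (mtrace (B * A * B * A * \<sigma>))"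
proof -
  note A' = binary_observableD[OF A] and B' = binary_observableD[OF B]
  have r: "(-1::real) ^ k * (-1) ^ k = 1"
    by (simp add: power_mult_distrib[symmetric])
  have AB: "A * B \<in> carrier_mat d d" and BA: "B * A \<in> carrier_mat d d"
    using A' B' by auto
  have "adj (A * B - (-1) ^ k \<cdot>\<^sub>m (B * A)) * (A * B - (-1) ^ k \<cdot>\<^sub>m (B * A))
      = 1\<^sub>m d - (-1) ^ k \<cdot>\<^sub>m (B * A * B * A + A * B * A * B) + 1\<^sub>m d"
    using adj_diff_sign_smult_mult_self[OF AB BA r] A' B'
    by (simp add: adj_mult[of _ d d _ d] assoc_mult_mat[of _ d d _ d _ d]
        binary_observable_mult_cancel[OF A] binary_observable_mult_cancel[OF B])
  then have "mtrace (adj (A * B - (-1) ^ k \<cdot>\<^sub>m (B * A)) * (A * B - (-1) ^ k \<cdot>\<^sub>m (B * A)) * \<sigma>)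
      = 2 - (-1) ^ k * (mtrace (B * A * B * A * \<sigma>) + mtrace (A * B * A * B * \<sigma>))"
    using A' B' \<sigma>
    by (simp add: mtrace_add_mult[where d = d] mtrace_diff_mult[where d = d]
        mtrace_smult_mult[where d = d] minus_carrier_mat
        assoc_mult_mat[of _ d d _ d _ d])
  then show ?thesis
    unfolding snorm_sq_def mtrace_alternating_adj[OF A B \<sigma>(1,2)]
    by simp
qed

lemma snorm_sq_commutator_swap:
  assumes A: "binary_observable d A" and B: "binary_observable d B"
    and \<sigma>: "\<sigma> \<in> carrier_mat d d" "adj \<sigma> = \<sigma>" "mtrace \<sigma> = 1"
  shows "snorm_sq \<sigma> (A * B - (-1) ^ k \<cdot>\<^sub>m (B * A)) = snorm_sq \<sigma> (B * A - (-1) ^ k \<cdot>\<^sub>m (A * B))"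
  unfolding snorm_sq_commutator[OF A B \<sigma>] snorm_sq_commutator[OF B A \<sigma>]
    mtrace_alternating_adj[OF A B \<sigma>(1,2)] by simp

lemma unitary_mult_binary_observable:
  assumes A: "binary_observable d A" and B: "binary_observable d B"
  shows "unitary d (A * B)"
proof -
  note A' = binary_observableD[OF A] and B' = binary_observableD[OF B]
  have "adj (A * B) = B * A"
    using adj_mult[OF A'(1) B'(1)] A' B' by simp
  then show ?thesis
    unfolding unitary_def using A' B'
    by (simp add: assoc_mult_mat[of _ d d _ d _ d] binary_observable_mult_cancel[OF A]
        binary_observable_mult_cancel[OF B])
qed

lemma unitary_smult:
  assumes U: "unitary d U" and c: "cnj c * c = 1"
  shows "unitary d (c \<cdot>\<^sub>m U)"
proof -
  have "c * cnj c = 1" using c by (simp add: mult.commute)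
  then show ?thesis
    using U c unfolding unitary_def adj_smult
    by (simp add: mult_smult_distrib[of _ d d _ d] mult_smult_assoc_mat[of _ d d _ d] smult_smult_mat
        one_smult_mat)
qed

lemma kron_max_mixed_0: "R \<in> carrier_mat d d \<Longrightarrow> kron R (max_mixed 0) = R"
  by (intro eq_matI) (auto simp: kron_def max_mixed_def)

lemma comp_approx_snorm_sq_commutator:
  fixes Eff :: "complex mat set"
  assumes Eff_mult: "\<And>m U V. U \<in> carrier_mat m m \<Longrightarrow> V \<in> carrier_mat m m \<Longrightarrow>
                       U \<in> Eff \<Longrightarrow> V \<in> Eff \<Longrightarrow> U * V \<in> Eff"
    and Eff_neg: "\<And>U. U \<in> Eff \<Longrightarrow> - U \<in> Eff"
    and A: "binary_observable d A" "A \<in> Eff" and B: "binary_observable d B" "B \<in> Eff"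
    and R: "R \<in> carrier_mat d d" and T: "T \<in> carrier_mat d d"
    and approx: "comp_approx Eff d \<delta> R T"
  shows "\<bar>snorm_sq R (A * B - (-1) ^ k \<cdot>\<^sub>m (B * A)) - snorm_sq T (A * B - (-1) ^ k \<cdot>\<^sub>m (B * A))\<bar> \<le> \<delta>"
proof -
  note A' = binary_observableD[OF A(1)] and B' = binary_observableD[OF B(1)]
  have AB: "A * B \<in> Eff" and BA: "B * A \<in> Eff"
    using Eff_mult A' B' A(2) B(2) by auto
  have "(-1) ^ k \<cdot>\<^sub>m (B * A) = (if even k then B * A else - (B * A))"
    by (intro eq_matI) auto
  then have "(-1) ^ k \<cdot>\<^sub>m (B * A) \<in> Eff"
    using BA Eff_neg by simp
  moreover have "unitary (d * 2 ^ 0) (A * B)" "unitary (d * 2 ^ 0) ((-1) ^ k \<cdot>\<^sub>m (B * A))"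
    using unitary_mult_binary_observable[OF A(1) B(1)]
      unitary_smult[OF unitary_mult_binary_observable[OF B(1) A(1)], of "(-1) ^ k"]
    by (simp_all add: power_mult_distrib[symmetric])
  ultimately show ?thesis
    using approx[unfolded comp_approx_def, rule_format,
        where k = 0 and U = "A * B" and U' = "(-1) ^ k \<cdot>\<^sub>m (B * A)"] AB
    by (simp add: kron_max_mixed_0[OF R] kron_max_mixed_0[OF T])
qed

section \<open>The twirled state\<close>

lemma twirl_carrier [simp]: "twirl d n W \<rho> \<in> carrier_mat d d"
  by (simp add: twirl_def)

lemma dim_twirl [simp]: "dim_row (twirl d n W \<rho>) = d" "dim_col (twirl d n W \<rho>) = d"
  by (simp_all add: twirl_def)

lemma twirl_index:
  "i < d \<Longrightarrow> j < d \<Longrightarrow>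
    twirl d n W \<rho> $$ (i,j) = (\<Sum>a\<in>cube n. (W a * \<rho> * W a) $$ (i,j)) / of_nat (card (cube n))"
  by (simp add: twirl_def)

lemma mtrace_mult_twirl:
  assumes M: "M \<in> carrier_mat d d" and R: "R \<in> carrier_mat d d"
    and W: "\<And>c. c \<in> cube n \<Longrightarrow> W c \<in> carrier_mat d d"
  shows "mtrace (M * twirl d n W R) = (\<Sum>c\<in>cube n. mtrace (W c * (M * (W c * R)))) / of_nat (card (cube n))"
proof -
  let ?N = "of_nat (card (cube n)) :: complex"
  have "mtrace (M * twirl d n W R) = (\<Sum>i<d. \<Sum>k<d. M $$ (i,k) * ((\<Sum>c\<in>cube n. (W c * R * W c) $$ (k,i)) / ?N))"
    using M by (simp add: mtrace_def scalar_prod_def atLeast0LessThan twirl_index)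
  also have "\<dots> = (\<Sum>i<d. \<Sum>k<d. \<Sum>c\<in>cube n. M $$ (i,k) * (W c * R * W c) $$ (k,i) / ?N)"
    by (simp add: sum_divide_distrib sum_distrib_left)
  also have "\<dots> = (\<Sum>c\<in>cube n. \<Sum>i<d. \<Sum>k<d. M $$ (i,k) * (W c * R * W c) $$ (k,i) / ?N)"
    by (rule sum_rotate3)
  also have "\<dots> = (\<Sum>c\<in>cube n. mtrace (M * (W c * R * W c)) / ?N)"
  proof (intro sum.cong refl)
    fix c assume "c \<in> cube n"
    then have "W c * R * W c \<in> carrier_mat d d" using W[of c] R by simp
    then have "dim_row (W c * R * W c) = d" "dim_col (W c * R * W c) = d" by auto
    then show "(\<Sum>i<d. \<Sum>k<d. M $$ (i,k) * (W c * R * W c) $$ (k,i) / ?N) = mtrace (M * (W c * R * W c)) / ?N"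
      using M by (simp add: mtrace_def scalar_prod_def atLeast0LessThan sum_divide_distrib)
  qed
  also have "\<dots> = (\<Sum>c\<in>cube n. mtrace (W c * (M * (W c * R)))) / ?N"
    unfolding sum_divide_distrib
  proof (intro sum.cong refl arg_cong2[where f = "(/)"])
    fix c assume "c \<in> cube n"
    then have Wc: "W c \<in> carrier_mat d d" by (rule W)
    have "mtrace (M * (W c * R * W c)) = mtrace ((M * (W c * R)) * W c)"
      using M Wc R by (simp add: assoc_mult_mat[of _ d d _ d _ d])
    also have "\<dots> = mtrace (W c * (M * (W c * R)))"
      using M Wc R by (intro mtrace_mult_commute[of _ d d]) auto
    finally show "mtrace (M * (W c * R * W c)) = mtrace (W c * (M * (W c * R)))" .
  qed
  finally show ?thesis .
qed

lemma mtrace_twirl: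
  assumes R: "R \<in> carrier_mat d d" "mtrace R = 1"
    and W: "\<And>c. c \<in> cube n \<Longrightarrow> binary_observable d (W c)"
  shows "mtrace (twirl d n W R) = 1"
proof -
  have "mtrace (twirl d n W R) = mtrace (1\<^sub>m d * twirl d n W R)"
    using left_mult_one_mat[OF twirl_carrier] by simp
  also have "\<dots> = (\<Sum>c\<in>cube n. mtrace (W c * (1\<^sub>m d * (W c * R)))) / of_nat (card (cube n))"
    using binary_observableD(1)[OF W] by (intro mtrace_mult_twirl R) auto
  also have "\<dots> = (\<Sum>c\<in>cube n. 1) / of_nat (card (cube n))"
  proof (intro arg_cong2[where f = "(/)"] sum.cong refl)
    fix c assume c: "c \<in> cube n"
    have "W c * (1\<^sub>m d * (W c * R)) = R"
      using binary_observableD(1)[OF W[OF c]] R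
      by (simp add: left_mult_one_mat[of "W c * R" d d] binary_observable_mult_cancel[OF W[OF c] R(1)])
    then show "mtrace (W c * (1\<^sub>m d * (W c * R))) = 1"
      using R by simp
  qed
  also have "\<dots> = 1"
    by (simp add: card_cube)
  finally show ?thesis .
qed

lemma adj_twirl:
  assumes R: "R \<in> carrier_mat d d" "adj R = R"
    and W: "\<And>c. c \<in> cube n \<Longrightarrow> binary_observable d (W c)"
  shows "adj (twirl d n W R) = twirl d n W R"
proof (rule eq_matI)
  fix i j assume "i < dim_row (twirl d n W R)" "j < dim_col (twirl d n W R)"
  then have i: "i < d" and j: "j < d" by (auto simp: twirl_def)
  have "(W c * R * W c) $$ (i,j) = cnj ((W c * R * W c) $$ (j,i))" if c: "c \<in> cube n" for c
  proof (rule hermitian_entry[OF _ _ i j])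
    note Wc = binary_observableD[OF W[OF c]]
    show "adj (W c * R * W c) = W c * R * W c"
      using Wc R by (simp add: adj_mult[of _ d d _ d] assoc_mult_mat[of _ d d _ d _ d])
    show "W c * R * W c \<in> carrier_mat d d"
      using Wc R by auto
  qed
  then show "adj (twirl d n W R) $$ (i,j) = twirl d n W R $$ (i,j)"
    using i j by (simp add: twirl_index cnj_sum)
qed (auto simp: twirl_def)

lemma mtrace_conj_shift:
  assumes W: "\<And>a. a \<in> cube n \<Longrightarrow> binary_observable d (W a)"
    and hom: "\<And>a b. a \<in> cube n \<Longrightarrow> b \<in> cube n \<Longrightarrow> W a * W b = W (bxor a b)"
    and U: "binary_observable d U" and R: "R \<in> carrier_mat d d"
    and a: "a \<in> cube n" and c: "c \<in> cube n"
  defines "B \<equiv> \<lambda>x. U * (W x * (U * W x))"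
  shows "mtrace (W c * (B a * (W c * R))) = mtrace (adj (B c) * (B (bxor c a) * R))"
proof -
  define e where "e = bxor c a"
  have e: "e \<in> cube n"
    unfolding e_def by (rule bxor_in_cube[OF c a])
  note Wa = binary_observableD[OF W[OF a]] and Wc = binary_observableD[OF W[OF c]]
    and We = binary_observableD[OF W[OF e]] and U' = binary_observableD[OF U]
  have adj_Bc: "adj (B c) = W c * (U * (W c * U))"
    unfolding B_def using U' Wc by (simp add: adj_mult[of _ d d _ d] assoc_mult_mat[of _ d d _ d _ d])
  have Wce: "W c * W e = W a"
    using hom[OF c e] a c by (simp add: e_def bxor_bxor_cancel cube_def)
  have Wac: "W a * W c = W e"
    using hom[OF a c] by (simp add: e_def bxor_commute)
  have "adj (B c) * (B e * R) = W c * (U * ((W c * W e) * (U * (W e * R))))"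
    unfolding adj_Bc unfolding B_def using U' Wc We R
    by (simp add: assoc_mult_mat[of _ d d _ d _ d] binary_observable_mult_cancel[OF U, where n = d])
  also have "\<dots> = W c * (U * (W a * (U * ((W a * W c) * R))))"
    unfolding Wce Wac ..
  also have "\<dots> = W c * (B a * (W c * R))"
    unfolding B_def using U' Wa Wc R by (simp add: assoc_mult_mat[of _ d d _ d _ d])
  finally show ?thesis
    unfolding e_def by simp
qed

lemma fourier_coeff_twirled_correlation_nonneg:
  assumes W: "\<And>a. a \<in> cube n \<Longrightarrow> binary_observable d (W a)"
    and hom: "\<And>a b. a \<in> cube n \<Longrightarrow> b \<in> cube n \<Longrightarrow> W a * W b = W (bxor a b)"
    and U: "binary_observable d U" and R: "density d R"
    and u: "u \<in> cube n" and \<psi>: "\<psi> \<in> cube n"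
  shows "0 \<le> fourier_coeff n (\<lambda>a. (-1) ^ bdot a u * Re (mtrace (U * W a * U * W a * twirl d n W R))) \<psi>"
proof -
  define \<omega> where "\<omega> = bxor \<psi> u"
  define B where "B = (\<lambda>x. U * (W x * (U * W x)))"
  define \<tau> where "\<tau> = twirl d n W R"
  define N where "N = card (cube n)"
  note Rc = densityD(1)[OF R] and U' = binary_observableD[OF U]
  have N: "N > 0"
    unfolding N_def card_cube by simp
  have Bc: "B x \<in> carrier_mat d d" if "x \<in> cube n" for x
    unfolding B_def using U' binary_observableD(1)[OF W[OF that]] by simp
  have twirled: "mtrace (B a * \<tau>) * of_nat N = (\<Sum>c\<in>cube n. mtrace (W c * (B a * (W c * R))))"
    if "a \<in> cube n" for a
    using N mtrace_mult_twirl[OF Bc[OF that] Rc binary_observableD(1)[OF W]] by (simp add: \<tau>_def N_def)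
  have "(\<Sum>a\<in>cube n. of_real ((-1) ^ bdot a \<omega>) * mtrace (B a * \<tau>)) * of_nat N
      = (\<Sum>a\<in>cube n. \<Sum>c\<in>cube n. of_real ((-1) ^ bdot a \<omega>) * mtrace (W c * (B a * (W c * R))))"
    unfolding sum_distrib_right mult.assoc by (simp add: twirled sum_distrib_left cong: sum.cong)
  also have "\<dots> = (\<Sum>c\<in>cube n. \<Sum>a\<in>cube n. of_real ((-1) ^ bdot a \<omega>) * mtrace (W c * (B a * (W c * R))))"
    by (rule sum.swap)
  also have "\<dots> = (\<Sum>c\<in>cube n. \<Sum>e\<in>cube n. of_real ((-1) ^ bdot c \<omega> * (-1) ^ bdot e \<omega>) * mtrace (adj (B c) * (B e * R)))"
    unfolding sum_sign_shift[symmetric] B_def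
    using mtrace_conj_shift[OF W hom U Rc] by (intro sum.cong refl) simp
  finally have "0 \<le> Re ((\<Sum>a\<in>cube n. of_real ((-1) ^ bdot a \<omega>) * mtrace (B a * \<tau>)) * of_nat N)"
    using gram_mtrace_nonneg[where I = "cube n" and \<beta> = "\<lambda>c. (-1) ^ bdot c \<omega>", OF Bc R]
    by (simp only:)
  then have "0 \<le> (\<Sum>a\<in>cube n. (-1) ^ bdot a \<omega> * Re (mtrace (B a * \<tau>))) / N"
    using N by (simp add: Re_sum zero_le_mult_iff)
  also have "\<dots> = fourier_coeff n (\<lambda>a. (-1) ^ bdot a u * Re (mtrace (U * W a * U * W a * \<tau>))) \<psi>"
    unfolding fourier_coeff_def avg_def N_def \<omega>_def
  proof (intro arg_cong2[where f = "(/)"] sum.cong refl)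
    fix a assume a: "a \<in> cube n"
    have "U * W a * U * W a * \<tau> = B a * \<tau>"
      unfolding B_def \<tau>_def using U' binary_observableD(1)[OF W[OF a]]
      by (simp add: assoc_mult_mat[of _ d d _ d _ d])
    then show "(-1) ^ bdot a (bxor \<psi> u) * Re (mtrace (B a * \<tau>))
      = (-1) ^ bdot a \<psi> * ((-1) ^ bdot a u * Re (mtrace (U * W a * U * W a * \<tau>)))"
      using \<psi> u by (simp add: sign_bdot_bxor_right cube_def)
  qed
  finally show ?thesis
    unfolding \<tau>_def .
qed

lemma avg_biased_twirled_commutator:
  assumes W: "\<And>a. a \<in> cube n \<Longrightarrow> binary_observable d (W a)"
    and hom: "\<And>a b. a \<in> cube n \<Longrightarrow> b \<in> cube n \<Longrightarrow> W a * W b = W (bxor a b)"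
    and U: "binary_observable d U" and R: "density d R"
    and S: "lambda_biased n lam S" and u: "u \<in> cube n"
  defines "F \<equiv> \<lambda>a. snorm_sq (twirl d n W R) (W a * U - (-1) ^ bdot a u \<cdot>\<^sub>m (U * W a))"
  shows "(1 - lam) * avg (cube n) F \<le> avg S F"
proof -
  define \<tau> where "\<tau> = twirl d n W R"
  define h where "h = (\<lambda>a. (-1) ^ bdot a u * Re (mtrace (U * W a * U * W a * \<tau>)))"
  define z where "z = replicate n False"
  note Rd = densityD[OF R] and U' = binary_observableD[OF U]
  have \<tau>: "\<tau> \<in> carrier_mat d d" "adj \<tau> = \<tau>" "mtrace \<tau> = 1"
    unfolding \<tau>_def using adj_twirl[OF Rd(1,2) W] mtrace_twirl[OF Rd(1,3) W] by auto
  have S_sub: "S \<subseteq> cube n" and S_ne: "S \<noteq> {}"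
    using S unfolding lambda_biased_def by auto
  have "h z = 1"
    using binary_observable_hom_zero[OF W hom] U' \<tau>
    by (simp add: h_def z_def assoc_mult_mat[of _ d d _ d _ d] binary_observable_mult_cancel[OF U])
  have "avg S h \<le> lam * h z + (1 - lam) * avg (cube n) h"
    unfolding z_def using fourier_coeff_twirled_correlation_nonneg[OF W hom U R u]
    by (intro avg_biased_le_of_fourier_coeff_nonneg[OF S]) (simp add: h_def \<tau>_def)
  have F: "F a = 2 + (-2) * h a" if "a \<in> cube n" for a
    unfolding F_def h_def \<tau>_def[symmetric] snorm_sq_commutator[OF W[OF that] U \<tau>] by simp
  have avg_F: "avg A F = 2 + (-2) * avg A h" if "A \<subseteq> cube n" "A \<noteq> {}" for A
  proof -
    have "avg A F = avg A (\<lambda>a. 2 + (-2) * h a)"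
      using F that(1) by (intro avg_cong) auto
    also have "\<dots> = 2 + (-2) * avg A h"
      using finite_subset[OF that(1) finite_cube] that(2) by (rule avg_affine)
    finally show ?thesis .
  qed
  have "cube n \<noteq> {}"
    using replicate_False_in_cube by blast
  show ?thesis
    unfolding avg_F[OF S_sub S_ne] avg_F[OF order_refl \<open>cube n \<noteq> {}\<close>]
    using \<open>h z = 1\<close> \<open>avg S h \<le> lam * h z + (1 - lam) * avg (cube n) h\<close>
    by (simp add: algebra_simps)
qed

lemma avg_biased_commutator_lower_bound:
  fixes Eff :: "complex mat set"
  assumes Eff_mult: "\<And>m U V. U \<in> carrier_mat m m \<Longrightarrow> V \<in> carrier_mat m m \<Longrightarrow>
                       U \<in> Eff \<Longrightarrow> V \<in> Eff \<Longrightarrow> U * V \<in> Eff"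
    and Eff_neg: "\<And>U. U \<in> Eff \<Longrightarrow> - U \<in> Eff"
    and W: "\<And>a. a \<in> cube n \<Longrightarrow> binary_observable d (W a) \<and> W a \<in> Eff"
    and hom: "\<And>a b. a \<in> cube n \<Longrightarrow> b \<in> cube n \<Longrightarrow> W a * W b = W (bxor a b)"
    and U: "binary_observable d U \<and> U \<in> Eff" and R: "density d R"
    and S: "lambda_biased n lam S" and lam: "lam \<le> 1" and u: "u \<in> cube n"
    and approx: "comp_approx Eff d \<delta> R (twirl d n W R)"
  defines "F \<equiv> \<lambda>a. snorm_sq R (W a * U - (-1) ^ bdot a u \<cdot>\<^sub>m (U * W a))"
  shows "(1 - lam) * avg (cube n) F - (2 - lam) * \<delta> \<le> avg S F"
proof -
  have S_sub: "S \<subseteq> cube n" and S_ne: "S \<noteq> {}"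
    using S unfolding lambda_biased_def by auto
  have "(1 - lam) * avg (cube n) F - (1 + (1 - lam)) * \<delta> \<le> avg S F"
  proof (rule avg_transfer_lower_bound[OF finite_cube S_sub S_ne])
    show "\<bar>F a - snorm_sq (twirl d n W R) (W a * U - (-1) ^ bdot a u \<cdot>\<^sub>m (U * W a))\<bar> \<le> \<delta>"
      if "a \<in> cube n" for a
      unfolding F_def using W[OF that] U densityD(1)[OF R]
      by (intro comp_approx_snorm_sq_commutator[OF Eff_mult Eff_neg _ _ _ _ _ twirl_carrier approx]) auto
    show "(1 - lam) * avg (cube n) (\<lambda>a. snorm_sq (twirl d n W R) (W a * U - (-1) ^ bdot a u \<cdot>\<^sub>m (U * W a)))
      \<le> avg S (\<lambda>a. snorm_sq (twirl d n W R) (W a * U - (-1) ^ bdot a u \<cdot>\<^sub>m (U * W a)))"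
      using W U by (intro avg_biased_twirled_commutator[OF _ hom _ R S u]) auto
  qed (use lam in simp)
  then show ?thesis
    by simp
qed

lemma avg_biased_commutator_lower_bound_swapped:
  fixes Eff :: "complex mat set"
  assumes Eff_mult: "\<And>m U V. U \<in> carrier_mat m m \<Longrightarrow> V \<in> carrier_mat m m \<Longrightarrow>
                       U \<in> Eff \<Longrightarrow> V \<in> Eff \<Longrightarrow> U * V \<in> Eff"
    and Eff_neg: "\<And>U. U \<in> Eff \<Longrightarrow> - U \<in> Eff"
    and W: "\<And>a. a \<in> cube n \<Longrightarrow> binary_observable d (W a) \<and> W a \<in> Eff"
    and hom: "\<And>a b. a \<in> cube n \<Longrightarrow> b \<in> cube n \<Longrightarrow> W a * W b = W (bxor a b)"
    and U: "binary_observable d U \<and> U \<in> Eff" and R: "density d R"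
    and S: "lambda_biased n lam S" and lam: "lam \<le> 1" and u: "u \<in> cube n"
    and approx: "comp_approx Eff d \<delta> R (twirl d n W R)"
  defines "F \<equiv> \<lambda>a. snorm_sq R (U * W a - (-1) ^ bdot u a \<cdot>\<^sub>m (W a * U))"
  shows "(1 - lam) * avg (cube n) F - (2 - lam) * \<delta> \<le> avg S F"
proof -
  have "F a = snorm_sq R (W a * U - (-1) ^ bdot a u \<cdot>\<^sub>m (U * W a))" if "a \<in> cube n" for a
    unfolding F_def bdot_commute[of u a] using W[OF that] U densityD[OF R]
    by (intro snorm_sq_commutator_swap) auto
  then have "avg A F = avg A (\<lambda>a. snorm_sq R (W a * U - (-1) ^ bdot a u \<cdot>\<^sub>m (U * W a)))"
    if "A \<subseteq> cube n" for A
    using that by (intro avg_cong) auto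
  then show ?thesis
    using avg_biased_commutator_lower_bound[OF Eff_mult Eff_neg W hom U R S lam u approx] S
    unfolding lambda_biased_def by simp
qed

theorem corollary3p5:
  fixes Eff :: "complex mat set" and d n :: nat and lam \<delta> :: real
    and X Z :: "bool list \<Rightarrow> complex mat" and \<rho> :: "complex mat" and S :: "bool list set"
  assumes Eff_mult: "\<And>m U V. U \<in> carrier_mat m m \<Longrightarrow> V \<in> carrier_mat m m \<Longrightarrow>
                       U \<in> Eff \<Longrightarrow> V \<in> Eff \<Longrightarrow> U * V \<in> Eff"
    and Eff_neg: "\<And>U. U \<in> Eff \<Longrightarrow> - U \<in> Eff"
    and lam: "0 \<le> lam" "lam < 1"
    and del: "0 \<le> \<delta>"
    and obsX: "\<And>a. a \<in> cube n \<Longrightarrow> binary_observable d (X a) \<and> X a \<in> Eff"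
    and obsZ: "\<And>a. a \<in> cube n \<Longrightarrow> binary_observable d (Z a) \<and> Z a \<in> Eff"
    and homX: "\<And>a b. a \<in> cube n \<Longrightarrow> b \<in> cube n \<Longrightarrow> X a * X b = X (bxor a b)"
    and homZ: "\<And>a b. a \<in> cube n \<Longrightarrow> b \<in> cube n \<Longrightarrow> Z a * Z b = Z (bxor a b)"
    and state: "density d \<rho>"
    and twX: "comp_approx Eff d \<delta> \<rho> (twirl d n X \<rho>)"
    and twZ: "comp_approx Eff d \<delta> \<rho> (twirl d n Z \<rho>)"
    and biased: "lambda_biased n lam S"
  shows "avg (cube n \<times> cube n)
           (\<lambda>(a,b). snorm_sq \<rho> (Z a * X b - ((-1) ^ bdot a b) \<cdot>\<^sub>m (X b * Z a)))
         \<le> 1 / (1 - lam)\<^sup>2 * avg (S \<times> S)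
           (\<lambda>(a,b). snorm_sq \<rho> (Z a * X b - ((-1) ^ bdot a b) \<cdot>\<^sub>m (X b * Z a)))
           + 2 * \<delta> * (2 - lam) / (1 - lam)\<^sup>2"
proof -
  define F where "F a b = snorm_sq \<rho> (Z a * X b - (-1) ^ bdot a b \<cdot>\<^sub>m (X b * Z a))" for a b
  have S: "S \<subseteq> cube n" "S \<noteq> {}"
    using biased unfolding lambda_biased_def by auto
  have rows: "(1 - lam) * avg (cube n) (\<lambda>a. F a b) - (2 - lam) * \<delta> \<le> avg S (\<lambda>a. F a b)"
    if "b \<in> S" for b
    unfolding F_def using that S(1) lam
    by (intro avg_biased_commutator_lower_bound[OF Eff_mult Eff_neg obsZ homZ obsX state biased _ _ twZ]) auto
  have cols: "(1 - lam) * avg (cube n) (F a) - (2 - lam) * \<delta> \<le> avg S (F a)"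
    if "a \<in> cube n" for a
    unfolding F_def using that lam
    by (intro avg_biased_commutator_lower_bound_swapped[OF Eff_mult Eff_neg obsX homX obsZ state biased _ _ twX]) auto
  have "(1 - lam)\<^sup>2 * avg (cube n \<times> cube n) (\<lambda>(a,b). F a b)
      \<le> avg (S \<times> S) (\<lambda>(a,b). F a b) + (2 - lam) * ((2 - lam) * \<delta>)"
    using avg_Times_lower_bound[OF finite_cube S _ rows cols] lam by simp
  also have "\<dots> \<le> avg (S \<times> S) (\<lambda>(a,b). F a b) + 2 * \<delta> * (2 - lam)"
    using lam del by (simp add: mult_right_mono mult_left_mono)
  finally have "avg (cube n \<times> cube n) (\<lambda>(a,b). F a b)
      \<le> (avg (S \<times> S) (\<lambda>(a,b). F a b) + 2 * \<delta> * (2 - lam)) / (1 - lam)\<^sup>2"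
    using lam by (simp add: pos_le_divide_eq mult.commute)
  then show ?thesis
    by (simp add: F_def add_divide_distrib)
qed

end
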